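(* Let $\Sigma=[-\tfrac12,\tfrac12]^2$ with the sup distance, and for $\gamma\in I=[-\tfrac12,\tfrac12]$ let $\gamma$ also denote the vertical leaf $\{\gamma\}\times I$. Let $\mu^1,\mu^2$ be Borel probability measures on $\Sigma$ such that for each Borel $A\subset\Sigma$ and $i=1,2$, $$\mu^i(A)=\int_{I}\mu^i_\gamma(A\cap\gamma)\,d\mu^i_x(\gamma),$$ where the $\mu^i_\gamma$ are probability measures on the leaves $\gamma$ and $\mu^i_x$ are probability measures on $I$ absolutely continuous with respect to Lebesgue measure. Suppose that (1) for almost every leaf $\gamma$, $W_1(\mu^1_\gamma,\mu^2_\gamma)\le\epsilon$, and (2) $\sup_{\|h\|_\infty\le1}\big|\int h\,d\mu^1_x-\int h\,d\mu^2_x\big|\le\delta$, the supremum over Borel $h:I\to\mathbb{R}$. Then $W_1(\mu^1,\mu^2)\le\epsilon+\delta$.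
   Context: For probability measures $\nu_1,\nu_2$ on a bounded metric space $Y$, $W_1(\nu_1,\nu_2)=\sup\{|\int g\,d\nu_1-\int g\,d\nu_2|: g:Y\to\mathbb{R}\ 1\text{-Lipschitz}\}$; on a leaf $\gamma$ the induced metric is used. *)

theory Defs
  imports "HOL-Probability.Probability"
begin

definition Iv :: "real set" where
  "Iv = {-1/2..1/2}"

definition Sq :: "(real \<times> real) set" where
  "Sq = Iv \<times> Iv"

definition leaf :: "real \<Rightarrow> (real \<times> real) set" where
  "leaf g = {g} \<times> Iv"

definition supdist :: "real \<times> real \<Rightarrow> real \<times> real \<Rightarrow> real" where
  "supdist p q = max \<bar>fst p - fst q\<bar> \<bar>snd p - snd q\<bar>"

text \<open>Wasserstein-1 distance (Kantorovich-Rubinstein dual form) of two measures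
  living on the subset Y with metric d: supremum over all 1-Lipschitz functions
  g : Y -> R of the difference of the integrals over Y.  Valued in ereal so
  that the supremum is meaningful without boundedness assumptions.\<close>
definition W1 :: "('a \<Rightarrow> 'a \<Rightarrow> real) \<Rightarrow> 'a set \<Rightarrow> 'a measure \<Rightarrow> 'a measure \<Rightarrow> ereal" where
  "W1 d Y m1 m2 =
     (SUP g \<in> {g :: 'a \<Rightarrow> real. \<forall>x\<in>Y. \<forall>y\<in>Y. \<bar>g x - g y\<bar> \<le> d x y}.
        ereal \<bar>(LINT x:Y|m1. g x) - (LINT x:Y|m2. g x)\<bar>)"

end

theory Submission
  imports Defs
begin

text \<open>Test \<open>W\<^sub>1\<close> against a 1-Lipschitz \<open>g\<close> on the square, shifted so that \<open>\<bar>g\<bar> \<le> 1/2\<close> there.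
  Integrating \<open>g\<close> along each leaf gives Borel functions \<open>F\<^sub>i \<gamma> = \<integral> g d\<mu>\<^sup>i\<^sub>\<gamma>\<close> with \<open>\<bar>F\<^sub>i\<bar> \<le> 1/2\<close>,
  and the disintegration gives \<open>\<integral> g d\<mu>\<^sup>i = \<integral> F\<^sub>i d\<mu>\<^sup>i\<^sub>x\<close>.  Split the difference as
  \<open>\<integral> (F\<^sub>1 - F\<^sub>2) d\<mu>\<^sup>1\<^sub>x + (\<integral> F\<^sub>2 d\<mu>\<^sup>1\<^sub>x - \<integral> F\<^sub>2 d\<mu>\<^sup>2\<^sub>x)\<close>.  The first term is at most \<open>\<epsilon>\<close>, since
  \<open>\<bar>F\<^sub>1 - F\<^sub>2\<bar> \<le> W\<^sub>1(\<mu>\<^sup>1\<^sub>\<gamma>, \<mu>\<^sup>2\<^sub>\<gamma>) \<le> \<epsilon>\<close> for Lebesgue-almost every leaf and hence \<open>\<mu>\<^sup>1\<^sub>x\<close>-almost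
  everywhere; the second is at most \<open>\<delta>\<close>, since \<open>F\<^sub>2\<close> is Borel with \<open>\<bar>F\<^sub>2\<bar> \<le> 1\<close>.\<close>

lemma Iv_borel [measurable]: "Iv \<in> sets borel"
  by (simp add: Iv_def)

lemma leaf_borel [measurable]: "leaf \<gamma> \<in> sets borel"
  by (auto simp: leaf_def Iv_def intro!: borel_closed closed_Times)

lemma Sq_borel [measurable]: "Sq \<in> sets borel"
  by (auto simp: Sq_def Iv_def intro!: borel_closed closed_Times)

lemma leaf_subset_Sq: "\<gamma> \<in> Iv \<Longrightarrow> leaf \<gamma> \<subseteq> Sq"
  by (auto simp: leaf_def Sq_def)

lemma supdist_le_dist: "supdist x y \<le> dist x y"
  by (cases x, cases y)
    (simp add: supdist_def dist_Pair_Pair dist_real_def real_sqrt_sum_squares_ge1 real_sqrt_sum_squares_ge2)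

lemma supdist_origin_le: "x \<in> Sq \<Longrightarrow> supdist x (0, 0) \<le> 1/2"
  by (cases x) (auto simp: supdist_def Sq_def Iv_def)

lemma supdist_lipschitz_continuous_on:
  assumes lip: "\<forall>x\<in>S. \<forall>y\<in>S. \<bar>g x - g y\<bar> \<le> supdist x y"
  shows "continuous_on S g"
  unfolding continuous_on_iff
proof (intro ballI allI impI exI conjI)
  fix x x' and e :: real
  assume "x \<in> S" "x' \<in> S" "dist x' x < e"
  then have "\<bar>g x' - g x\<bar> < e"
    using lip supdist_le_dist[of x' x] by fastforce
  then show "dist (g x') (g x) < e"
    by (simp add: dist_real_def)
qed

lemma set_integral_diff_le_W1:
  assumes "\<forall>x\<in>Y. \<forall>y\<in>Y. \<bar>g x - g y\<bar> \<le> d x y"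
  shows "ereal \<bar>(LINT x:Y|m1. g x) - (LINT x:Y|m2. g x)\<bar> \<le> W1 d Y m1 m2"
  unfolding W1_def using assms by (intro SUP_upper) simp

lemma W1_leI:
  assumes "\<And>g. \<forall>x\<in>Y. \<forall>y\<in>Y. \<bar>g x - g y\<bar> \<le> d x y \<Longrightarrow>
      \<bar>(LINT x:Y|m1. g x) - (LINT x:Y|m2. g x)\<bar> \<le> c"
  shows "W1 d Y m1 m2 \<le> ereal c"
  unfolding W1_def using assms by (intro SUP_least) simp

lemma abs_integral_diff_le_AE:
  fixes f g :: "'a \<Rightarrow> real"
  assumes "finite_measure M" "A \<in> sets M" "integrable M f" "integrable M g"
    and "AE x in M. \<bar>f x - g x\<bar> \<le> c * indicator A x"
  shows "\<bar>integral\<^sup>L M f - integral\<^sup>L M g\<bar> \<le> c * measure M A"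
proof -
  have "integrable M (\<lambda>x. c * indicator A x)"
    using assms(1,2) finite_measure.emeasure_finite[OF assms(1), of A]
    by (intro integrable_mult_right integrable_real_indicator) (auto simp: less_top)
  then have "integral\<^sup>L M (\<lambda>x. \<bar>f x - g x\<bar>) \<le> integral\<^sup>L M (\<lambda>x. c * indicator A x)"
    using assms(3-5) by (intro integral_mono_AE) auto
  moreover have "\<bar>integral\<^sup>L M f - integral\<^sup>L M g\<bar> \<le> integral\<^sup>L M (\<lambda>x. \<bar>f x - g x\<bar>)"
    using assms(3,4) integral_abs_bound[of M "\<lambda>x. f x - g x"] by simp
  ultimately show ?thesis
    using assms(1,2) by (simp add: finite_measure.emeasure_finite)
qed

text \<open>Truncation to \<open>Sq\<close> makes the test function Borel and globally bounded, as integration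
  against the leaf kernels requires.\<close>
definition centred :: "(real \<times> real \<Rightarrow> real) \<Rightarrow> real \<times> real \<Rightarrow> real" where
  "centred g x = indicator Sq x * (g x - g (0, 0))"

context
  fixes g :: "real \<times> real \<Rightarrow> real"
  assumes lip: "\<forall>x\<in>Sq. \<forall>y\<in>Sq. \<bar>g x - g y\<bar> \<le> supdist x y"
begin

lemma centred_measurable [measurable]: "centred g \<in> borel_measurable borel"
  unfolding centred_def
  using borel_measurable_continuous_on_indicator[OF Sq_borel, of "\<lambda>x. g x - g (0, 0)"]
    supdist_lipschitz_continuous_on[OF lip]
  by (simp add: continuous_on_diff)

lemma abs_centred_le: "\<bar>centred g x\<bar> \<le> 1/2"
proof (cases "x \<in> Sq")
  case True
  have "(0, 0) \<in> Sq" by (simp add: Sq_def Iv_def)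
  then have "\<bar>g x - g (0, 0)\<bar> \<le> supdist x (0, 0)"
    using lip True by blast
  then show ?thesis
    using supdist_origin_le[OF True] True by (simp add: centred_def)
qed (simp add: centred_def)

lemma centred_lipschitz: "\<forall>x\<in>Sq. \<forall>y\<in>Sq. \<bar>centred g x - centred g y\<bar> \<le> supdist x y"
  using lip by (simp add: centred_def)

lemma set_integral_centred:
  assumes "finite_measure M" "sets M = sets borel" "emeasure M Sq = 1"
  shows "(LINT x:Sq|M. g x) = (LINT x:Sq|M. centred g x) + g (0, 0)"
proof -
  have "integrable M (centred g)"
    using assms(1,2) abs_centred_le
    by (intro finite_measure.integrable_const_bound[where B="1/2"]) (auto cong: measurable_cong_sets)
  moreover have "integrable M (\<lambda>x. g (0, 0) * indicator Sq x)"
    using assms by (intro integrable_mult_right integrable_real_indicator) auto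
  ultimately have "integral\<^sup>L M (\<lambda>x. centred g x + g (0, 0) * indicator Sq x) =
      integral\<^sup>L M (centred g) + g (0, 0)"
    using assms(3) by (simp add: measure_def sets_eq_imp_space_eq[OF assms(2)])
  moreover have "(LINT x:Sq|M. g x) = integral\<^sup>L M (\<lambda>x. centred g x + g (0, 0) * indicator Sq x)"
    and "(LINT x:Sq|M. centred g x) = integral\<^sup>L M (centred g)"
    unfolding set_lebesgue_integral_def
    by (auto intro!: Bochner_Integration.integral_cong simp: centred_def indicator_def)
  ultimately show ?thesis by simp
qed

end

text \<open>The paper's leaf measure \<open>\<mu>\<^sub>\<gamma>\<close>, cut down to the leaf \<open>\<gamma>\<close> and taken to be zero off \<open>Iv\<close>.\<close>
definition leaf_kernel :: "(real \<Rightarrow> (real \<times> real) measure) \<Rightarrow> real \<Rightarrow> (real \<times> real) measure" where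
  "leaf_kernel nu \<gamma> =
     (if \<gamma> \<in> Iv then density (nu \<gamma>) (indicator (leaf \<gamma>)) else null_measure borel)"

lemma set_integral_Iv_leaf_kernel:
  "(LINT \<gamma>:Iv|M. integral\<^sup>L (leaf_kernel nu \<gamma>) f) = (\<integral>\<gamma>. integral\<^sup>L (leaf_kernel nu \<gamma>) f \<partial>M)"
  unfolding set_lebesgue_integral_def
  by (intro Bochner_Integration.integral_cong) (auto simp: leaf_kernel_def split: split_indicator)

locale leaf_family =
  fixes nu :: "real \<Rightarrow> (real \<times> real) measure"
  assumes prob_space_nu: "\<And>\<gamma>. \<gamma> \<in> Iv \<Longrightarrow> prob_space (nu \<gamma>)"
    and sets_nu: "\<And>\<gamma>. \<gamma> \<in> Iv \<Longrightarrow> sets (nu \<gamma>) = sets borel"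
begin

lemma sets_leaf_kernel [measurable_cong]: "sets (leaf_kernel nu \<gamma>) = sets borel"
  by (simp add: leaf_kernel_def sets_nu)

lemma emeasure_leaf_kernel:
  assumes "A \<in> sets borel"
  shows "emeasure (leaf_kernel nu \<gamma>) A = indicator Iv \<gamma> * emeasure (nu \<gamma>) (A \<inter> leaf \<gamma>)"
  using assms by (simp add: leaf_kernel_def sets_nu emeasure_restricted Int_commute)

lemma subprob_space_leaf_kernel: "subprob_space (leaf_kernel nu \<gamma>)"
proof (cases "\<gamma> \<in> Iv")
  case True
  interpret prob_space "nu \<gamma>" by (rule prob_space_nu[OF True])
  show ?thesis
  proof (rule subprob_spaceI)
    show "emeasure (leaf_kernel nu \<gamma>) (space (leaf_kernel nu \<gamma>)) \<le> 1"
      using True by (simp add: leaf_kernel_def emeasure_restricted[OF _ sets.top] sets_nu emeasure_le_1)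
    show "space (leaf_kernel nu \<gamma>) \<noteq> {}"
      using True not_empty by (simp add: leaf_kernel_def)
  qed
qed (simp add: leaf_kernel_def subprob_space_null_measure)

lemma integral_leaf_kernel:
  fixes f :: "real \<times> real \<Rightarrow> real"
  assumes "f \<in> borel_measurable borel"
  shows "integral\<^sup>L (leaf_kernel nu \<gamma>) f = indicator Iv \<gamma> * (LINT x:leaf \<gamma>|nu \<gamma>. f x)"
proof (cases "\<gamma> \<in> Iv")
  case True
  have "integral\<^sup>L (leaf_kernel nu \<gamma>) f =
      integral\<^sup>L (density (nu \<gamma>) (\<lambda>x. ennreal (indicator (leaf \<gamma>) x))) f"
    using True by (simp add: leaf_kernel_def ennreal_indicator)
  also have "\<dots> = (LINT x:leaf \<gamma>|nu \<gamma>. f x)"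
    unfolding set_lebesgue_integral_def using assms sets_nu[OF True]
    by (intro integral_density) (auto cong: measurable_cong_sets)
  finally show ?thesis
    using True by simp
qed (simp add: leaf_kernel_def)

lemma abs_integral_leaf_kernel_le:
  fixes f :: "real \<times> real \<Rightarrow> real"
  assumes f: "f \<in> borel_measurable borel" and bound: "\<And>x. \<bar>f x\<bar> \<le> B"
  shows "\<bar>integral\<^sup>L (leaf_kernel nu \<gamma>) f\<bar> \<le> B"
proof -
  interpret subprob_space "leaf_kernel nu \<gamma>" by (rule subprob_space_leaf_kernel)
  have "0 \<le> B"
    using bound[of undefined] by linarith
  have "\<bar>integral\<^sup>L (leaf_kernel nu \<gamma>) f\<bar> \<le> integral\<^sup>L (leaf_kernel nu \<gamma>) (\<lambda>x. \<bar>f x\<bar>)"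
    by (rule integral_abs_bound)
  also have "\<dots> \<le> integral\<^sup>L (leaf_kernel nu \<gamma>) (\<lambda>_. B)"
    using f bound \<open>0 \<le> B\<close>
    by (intro integral_mono integrable_const_bound[where B=B]) (auto cong: measurable_cong_sets)
  also have "\<dots> = B * measure (leaf_kernel nu \<gamma>) (space (leaf_kernel nu \<gamma>))"
    by simp
  also have "\<dots> \<le> B"
    using \<open>0 \<le> B\<close> subprob_measure_le_1 by (intro mult_left_le) auto
  finally show ?thesis .
qed

end

lemma abs_integral_leaf_kernels_diff_le:
  fixes f :: "real \<times> real \<Rightarrow> real"
  assumes "leaf_family nu1" "leaf_family nu2"
    and f: "f \<in> borel_measurable borel" "\<forall>x\<in>Sq. \<forall>y\<in>Sq. \<bar>f x - f y\<bar> \<le> supdist x y"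
    and W1_le: "\<gamma> \<in> Iv \<longrightarrow> W1 supdist (leaf \<gamma>) (nu1 \<gamma>) (nu2 \<gamma>) \<le> ereal \<epsilon>"
  shows "\<bar>integral\<^sup>L (leaf_kernel nu1 \<gamma>) f - integral\<^sup>L (leaf_kernel nu2 \<gamma>) f\<bar> \<le> \<epsilon> * indicator Iv \<gamma>"
proof (cases "\<gamma> \<in> Iv")
  case True
  have "\<forall>x\<in>leaf \<gamma>. \<forall>y\<in>leaf \<gamma>. \<bar>f x - f y\<bar> \<le> supdist x y"
    using f(2) leaf_subset_Sq[OF True] by blast
  then have "ereal \<bar>(LINT x:leaf \<gamma>|nu1 \<gamma>. f x) - (LINT x:leaf \<gamma>|nu2 \<gamma>. f x)\<bar> \<le> ereal \<epsilon>"
    using set_integral_diff_le_W1 W1_le True order_trans by blast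
  then show ?thesis
    using True f(1) leaf_family.integral_leaf_kernel[OF assms(1)] leaf_family.integral_leaf_kernel[OF assms(2)]
    by simp
qed (simp add: leaf_kernel_def)

locale leaf_disintegration = leaf_family nu
  for nu :: "real \<Rightarrow> (real \<times> real) measure" +
  fixes mu :: "(real \<times> real) measure" and mx :: "real measure"
  assumes prob_space_mu: "prob_space mu" and sets_mu: "sets mu = sets borel"
    and emeasure_mu_Sq: "emeasure mu Sq = 1"
    and prob_space_mx: "prob_space mx" and sets_mx: "sets mx = sets borel"
    and emeasure_nu_measurable: "\<And>A. A \<in> sets borel \<Longrightarrow> A \<subseteq> Sq \<Longrightarrow>
        (\<lambda>\<gamma>. indicator Iv \<gamma> * emeasure (nu \<gamma>) (A \<inter> leaf \<gamma>)) \<in> borel_measurable borel"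
    and disintegration: "\<And>A. A \<in> sets borel \<Longrightarrow> A \<subseteq> Sq \<Longrightarrow>
        emeasure mu A = (\<integral>\<^sup>+ \<gamma>\<in>Iv. emeasure (nu \<gamma>) (A \<inter> leaf \<gamma>) \<partial>mx)"
begin

lemma measurable_leaf_kernel: "leaf_kernel nu \<in> borel \<rightarrow>\<^sub>M subprob_algebra borel"
proof (rule measurable_subprob_algebra)
  fix A :: "(real \<times> real) set"
  assume A: "A \<in> sets borel"
  have "A \<inter> Sq \<inter> leaf \<gamma> = A \<inter> leaf \<gamma>" if "\<gamma> \<in> Iv" for \<gamma>
    using leaf_subset_Sq[OF that] by blast
  then have "emeasure (leaf_kernel nu \<gamma>) A = indicator Iv \<gamma> * emeasure (nu \<gamma>) (A \<inter> Sq \<inter> leaf \<gamma>)" for \<gamma>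
    using A by (simp add: emeasure_leaf_kernel split: split_indicator)
  then show "(\<lambda>\<gamma>. emeasure (leaf_kernel nu \<gamma>) A) \<in> borel_measurable borel"
    using A emeasure_nu_measurable[of "A \<inter> Sq"] by simp
qed (simp_all add: subprob_space_leaf_kernel sets_leaf_kernel)

lemma density_Sq_eq_bind: "density mu (indicator Sq) = mx \<bind> leaf_kernel nu"
proof (rule measure_eqI)
  have "space mx \<noteq> {}"
    using prob_space.not_empty[OF prob_space_mx] .
  then have "sets (mx \<bind> leaf_kernel nu) = sets borel"
    using measurable_leaf_kernel sets_mx by (simp add: sets_bind_measurable cong: measurable_cong_sets)
  then show "sets (density mu (indicator Sq)) = sets (mx \<bind> leaf_kernel nu)"
    by (simp add: sets_mu)
  fix A assume "A \<in> sets (density mu (indicator Sq))"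
  then have A: "A \<in> sets borel" by (simp add: sets_mu)
  have "Sq \<inter> A \<inter> leaf \<gamma> = A \<inter> leaf \<gamma>" if "\<gamma> \<in> Iv" for \<gamma>
    using leaf_subset_Sq[OF that] by blast
  then have "emeasure (density mu (indicator Sq)) A = (\<integral>\<^sup>+ \<gamma>\<in>Iv. emeasure (nu \<gamma>) (A \<inter> leaf \<gamma>) \<partial>mx)"
    using A by (auto simp: emeasure_restricted sets_mu disintegration
        intro!: nn_integral_cong split: split_indicator)
  also have "\<dots> = (\<integral>\<^sup>+ \<gamma>. emeasure (leaf_kernel nu \<gamma>) A \<partial>mx)"
    using A by (simp add: emeasure_leaf_kernel mult.commute)
  also have "\<dots> = emeasure (mx \<bind> leaf_kernel nu) A"
    using A \<open>space mx \<noteq> {}\<close> measurable_leaf_kernel sets_mx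
    by (intro emeasure_bind[symmetric]) (auto cong: measurable_cong_sets)
  finally show "emeasure (density mu (indicator Sq)) A = emeasure (mx \<bind> leaf_kernel nu) A" .
qed

lemma leaf_integral_measurable [measurable]:
  fixes f :: "real \<times> real \<Rightarrow> real"
  assumes "f \<in> borel_measurable borel"
  shows "(\<lambda>\<gamma>. integral\<^sup>L (leaf_kernel nu \<gamma>) f) \<in> borel_measurable borel"
  using measurable_compose[OF measurable_leaf_kernel integral_measurable_subprob_algebra[OF assms]] .

lemma integrable_leaf_integral:
  fixes f :: "real \<times> real \<Rightarrow> real"
  assumes "finite_measure M" "sets M = sets borel"
    and "f \<in> borel_measurable borel" "\<And>x. \<bar>f x\<bar> \<le> B"
  shows "integrable M (\<lambda>\<gamma>. integral\<^sup>L (leaf_kernel nu \<gamma>) f)"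
  using assms abs_integral_leaf_kernel_le
  by (intro finite_measure.integrable_const_bound[where B=B]) (auto cong: measurable_cong_sets)

lemma set_integral_Sq_eq_leaf_integral:
  fixes f :: "real \<times> real \<Rightarrow> real"
  assumes f [measurable]: "f \<in> borel_measurable borel" and bound: "\<And>x. \<bar>f x\<bar> \<le> B"
  shows "(LINT x:Sq|mu. f x) = (\<integral>\<gamma>. integral\<^sup>L (leaf_kernel nu \<gamma>) f \<partial>mx)"
proof -
  have "(LINT x:Sq|mu. f x) = integral\<^sup>L (density mu (\<lambda>x. ennreal (indicator Sq x))) f"
    unfolding set_lebesgue_integral_def using sets_mu
    by (intro integral_density[symmetric]) (auto cong: measurable_cong_sets)
  also have "\<dots> = integral\<^sup>L (mx \<bind> leaf_kernel nu) f"
    by (simp add: ennreal_indicator density_Sq_eq_bind)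
  also have "\<dots> = (\<integral>\<gamma>. integral\<^sup>L (leaf_kernel nu \<gamma>) f \<partial>mx)"
  proof (rule integral_bind[where B=B and B'=1])
    show "leaf_kernel nu \<in> mx \<rightarrow>\<^sub>M subprob_algebra borel"
      using measurable_leaf_kernel sets_mx by (simp cong: measurable_cong_sets)
    show "finite_measure mx"
      by (rule prob_space.finite_measure[OF prob_space_mx])
    show "AE \<gamma> in mx. emeasure (leaf_kernel nu \<gamma>) (space (leaf_kernel nu \<gamma>)) \<le> ennreal 1"
      using subprob_space.emeasure_space_le_1[OF subprob_space_leaf_kernel] by simp
  qed (use bound in auto)
  finally show ?thesis .
qed

lemma set_integral_Sq_eq_centred_leaf_integral:
  assumes "\<forall>x\<in>Sq. \<forall>y\<in>Sq. \<bar>g x - g y\<bar> \<le> supdist x y"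
  shows "(LINT x:Sq|mu. g x) = (\<integral>\<gamma>. integral\<^sup>L (leaf_kernel nu \<gamma>) (centred g) \<partial>mx) + g (0, 0)"
  using set_integral_centred[OF assms prob_space.finite_measure[OF prob_space_mu] sets_mu emeasure_mu_Sq]
    set_integral_Sq_eq_leaf_integral[OF centred_measurable[OF assms] abs_centred_le[OF assms]]
  by simp

lemma abs_leaf_integral_transverse_diff_le:
  fixes f :: "real \<times> real \<Rightarrow> real"
  assumes transverse: "\<And>h. h \<in> borel_measurable borel \<Longrightarrow> (\<forall>x\<in>Iv. \<bar>h x\<bar> \<le> 1) \<Longrightarrow>
      \<bar>(LINT x:Iv|M1. h x) - (LINT x:Iv|M2. h x)\<bar> \<le> \<delta>"
    and f: "f \<in> borel_measurable borel" "\<And>x. \<bar>f x\<bar> \<le> 1"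
  shows "\<bar>(\<integral>\<gamma>. integral\<^sup>L (leaf_kernel nu \<gamma>) f \<partial>M1) - (\<integral>\<gamma>. integral\<^sup>L (leaf_kernel nu \<gamma>) f \<partial>M2)\<bar> \<le> \<delta>"
  unfolding set_integral_Iv_leaf_kernel[symmetric]
  using f abs_integral_leaf_kernel_le[OF f] by (intro transverse) simp_all

end

lemma abs_leaf_integrals_diff_le:
  fixes f :: "real \<times> real \<Rightarrow> real"
  assumes "leaf_disintegration nu1 mu1 mx1" "leaf_disintegration nu2 mu2 mx2"
    and mx1: "emeasure mx1 Iv = 1" "absolutely_continuous lborel mx1"
    and leaves: "AE \<gamma> in lborel. \<gamma> \<in> Iv \<longrightarrow> W1 supdist (leaf \<gamma>) (nu1 \<gamma>) (nu2 \<gamma>) \<le> ereal \<epsilon>"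
    and f: "f \<in> borel_measurable borel" "\<And>x. \<bar>f x\<bar> \<le> B"
      "\<forall>x\<in>Sq. \<forall>y\<in>Sq. \<bar>f x - f y\<bar> \<le> supdist x y"
  shows "\<bar>(\<integral>\<gamma>. integral\<^sup>L (leaf_kernel nu1 \<gamma>) f \<partial>mx1) - (\<integral>\<gamma>. integral\<^sup>L (leaf_kernel nu2 \<gamma>) f \<partial>mx1)\<bar>
    \<le> \<epsilon>"
proof -
  interpret D1: leaf_disintegration nu1 mu1 mx1 by fact
  interpret D2: leaf_disintegration nu2 mu2 mx2 by fact
  have finite: "finite_measure mx1"
    by (rule prob_space.finite_measure[OF D1.prob_space_mx])
  have "AE \<gamma> in mx1. \<gamma> \<in> Iv \<longrightarrow> W1 supdist (leaf \<gamma>) (nu1 \<gamma>) (nu2 \<gamma>) \<le> ereal \<epsilon>"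
    using absolutely_continuous_AE[OF _ mx1(2) leaves] D1.sets_mx by simp
  then have "AE \<gamma> in mx1. \<bar>integral\<^sup>L (leaf_kernel nu1 \<gamma>) f - integral\<^sup>L (leaf_kernel nu2 \<gamma>) f\<bar>
      \<le> \<epsilon> * indicator Iv \<gamma>"
    by eventually_elim (rule abs_integral_leaf_kernels_diff_le[OF D1.leaf_family_axioms
          D2.leaf_family_axioms f(1,3)])
  then have "\<bar>(\<integral>\<gamma>. integral\<^sup>L (leaf_kernel nu1 \<gamma>) f \<partial>mx1) - (\<integral>\<gamma>. integral\<^sup>L (leaf_kernel nu2 \<gamma>) f \<partial>mx1)\<bar>
      \<le> \<epsilon> * measure mx1 Iv"
    using D1.integrable_leaf_integral[OF finite D1.sets_mx f(1,2)]
      D2.integrable_leaf_integral[OF finite D1.sets_mx f(1,2)] D1.sets_mx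
    by (intro abs_integral_diff_le_AE[OF finite]) simp_all
  also have "measure mx1 Iv = 1"
    using mx1(1) by (simp add: measure_def)
  finally show ?thesis
    by simp
qed

theorem proposition4p6:
  fixes mu1 mu2 :: "(real \<times> real) measure"
    and nu1 nu2 :: "real \<Rightarrow> (real \<times> real) measure"
    and mx1 mx2 :: "real measure"
    and \<epsilon> \<delta> :: real
  assumes mu1: "prob_space mu1" "sets mu1 = sets borel" "emeasure mu1 Sq = 1"
    and mu2: "prob_space mu2" "sets mu2 = sets borel" "emeasure mu2 Sq = 1"
    and nu1: "\<And>g. g \<in> Iv \<Longrightarrow> prob_space (nu1 g) \<and> sets (nu1 g) = sets borel \<and> emeasure (nu1 g) (leaf g) = 1"
    and nu2: "\<And>g. g \<in> Iv \<Longrightarrow> prob_space (nu2 g) \<and> sets (nu2 g) = sets borel \<and> emeasure (nu2 g) (leaf g) = 1"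
    and mx1: "prob_space mx1" "sets mx1 = sets borel" "emeasure mx1 Iv = 1" "absolutely_continuous lborel mx1"
    and mx2: "prob_space mx2" "sets mx2 = sets borel" "emeasure mx2 Iv = 1" "absolutely_continuous lborel mx2"
    and kernel1: "\<And>A. A \<in> sets borel \<Longrightarrow> A \<subseteq> Sq \<Longrightarrow>
        (\<lambda>g. indicator Iv g * emeasure (nu1 g) (A \<inter> leaf g)) \<in> borel_measurable borel"
    and kernel2: "\<And>A. A \<in> sets borel \<Longrightarrow> A \<subseteq> Sq \<Longrightarrow>
        (\<lambda>g. indicator Iv g * emeasure (nu2 g) (A \<inter> leaf g)) \<in> borel_measurable borel"
    and disint1: "\<And>A. A \<in> sets borel \<Longrightarrow> A \<subseteq> Sq \<Longrightarrow>
        emeasure mu1 A = (\<integral>\<^sup>+ g\<in>Iv. emeasure (nu1 g) (A \<inter> leaf g) \<partial>mx1)"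
    and disint2: "\<And>A. A \<in> sets borel \<Longrightarrow> A \<subseteq> Sq \<Longrightarrow>
        emeasure mu2 A = (\<integral>\<^sup>+ g\<in>Iv. emeasure (nu2 g) (A \<inter> leaf g) \<partial>mx2)"
    and leaves: "AE g in lborel. g \<in> Iv \<longrightarrow> W1 supdist (leaf g) (nu1 g) (nu2 g) \<le> ereal \<epsilon>"
    and transverse: "\<And>h. h \<in> borel_measurable borel \<Longrightarrow> (\<forall>x\<in>Iv. \<bar>h x\<bar> \<le> 1) \<Longrightarrow>
        \<bar>(LINT x:Iv|mx1. h x) - (LINT x:Iv|mx2. h x)\<bar> \<le> \<delta>"
  shows "W1 supdist Sq mu1 mu2 \<le> ereal (\<epsilon> + \<delta>)"
proof (rule W1_leI)
  fix g :: "real \<times> real \<Rightarrow> real"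
  assume lip: "\<forall>x\<in>Sq. \<forall>y\<in>Sq. \<bar>g x - g y\<bar> \<le> supdist x y"
  interpret D1: leaf_disintegration nu1 mu1 mx1
    by (intro leaf_disintegration.intro leaf_family.intro leaf_disintegration_axioms.intro)
      (simp_all add: mu1 mx1 nu1 kernel1 disint1)
  interpret D2: leaf_disintegration nu2 mu2 mx2
    by (intro leaf_disintegration.intro leaf_family.intro leaf_disintegration_axioms.intro)
      (simp_all add: mu2 mx2 nu2 kernel2 disint2)
  have centred_le_1: "\<bar>centred g x\<bar> \<le> 1" for x
    using abs_centred_le[OF lip, of x] by linarith
  have "\<bar>(\<integral>\<gamma>. integral\<^sup>L (leaf_kernel nu1 \<gamma>) (centred g) \<partial>mx1)
      - (\<integral>\<gamma>. integral\<^sup>L (leaf_kernel nu2 \<gamma>) (centred g) \<partial>mx1)\<bar> \<le> \<epsilon>"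
    by (rule abs_leaf_integrals_diff_le[OF D1.leaf_disintegration_axioms D2.leaf_disintegration_axioms
          mx1(3,4) leaves centred_measurable[OF lip] centred_le_1 centred_lipschitz[OF lip]])
  moreover have "\<bar>(\<integral>\<gamma>. integral\<^sup>L (leaf_kernel nu2 \<gamma>) (centred g) \<partial>mx1)
      - (\<integral>\<gamma>. integral\<^sup>L (leaf_kernel nu2 \<gamma>) (centred g) \<partial>mx2)\<bar> \<le> \<delta>"
    by (rule D2.abs_leaf_integral_transverse_diff_le[OF transverse centred_measurable[OF lip] centred_le_1])
  ultimately show "\<bar>(LINT x:Sq|mu1. g x) - (LINT x:Sq|mu2. g x)\<bar> \<le> \<epsilon> + \<delta>"
    using D1.set_integral_Sq_eq_centred_leaf_integral[OF lip]
      D2.set_integral_Sq_eq_centred_leaf_integral[OF lip]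
    by simp
qed

end
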